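(* Let $X$ be a $C^*$-correspondence over $A$ with left action $\phi$, and let $Y=X\oplus T$ over $B=A\oplus T$ be formed by adding the tail $T=(\ker\phi)^{(\mathbb N)}$. Let $(\tilde\pi,\tilde t)$ be a representation of $Y$ in a $C^*$-algebra that is coisometric on the ideal $\ker\phi\oplus T$ of $B$ (i.e. $\tilde\pi^{(1)}(\phi_B(b))=\tilde\pi(b)$ for all $b\in\ker\phi\oplus T$), and suppose that $a\mapsto\tilde\pi(a,\vec 0)$ is injective on $A$. For $f\in\ker\phi$ and $i\in\mathbb N$ let $\epsilon_i(f)\in T$ be the sequence with $f$ in the $i$-th position and $0$ elsewhere. Then for every $i\in\mathbb N$ and $f\in\ker\phi$, $\tilde\pi(0,\epsilon_i(f))=0$ implies $f=0$.
   Context: A $C^*$-correspondence over $A$ is a right Hilbert $A$-module $X$ with inner product $\langle\cdot,\cdot\rangle_A$ and a $*$-homomorphism $\phi:A\to\mathcal L(X)$; $\Theta_{\xi,\eta}(\zeta)=\xi\langle\eta,\zeta\rangle_A$, $\mathcal K(X)=\overline{\mathrm{span}}\{\Theta_{\xi,\eta}\}$. A representation of a correspondence $Y$ over $B$ in a $C^*$-algebra $C$ is a pair $(\tilde\pi,\tilde t)$ with $\tilde\pi:B\to C$ a $*$-homomorphism and $\tilde t:Y\to C$ linear such that $\tilde t(y)^*\tilde t(y')=\tilde\pi(\langle y,y'\rangle_B)$, $\tilde t(\phi_B(b)y)=\tilde\pi(b)\tilde t(y)$, $\tilde t(yb)=\tilde t(y)\tilde\pi(b)$; $\tilde\pi^{(1)}:\mathcal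 K(Y)\to C$ is the $*$-homomorphism with $\tilde\pi^{(1)}(\Theta_{y,y'})=\tilde t(y)\tilde t(y')^*$. Adding the tail: $T:=(\ker\phi)^{(\mathbb N)}$ is the $c_0$-direct sum of copies of $\ker\phi$ (elements $\vec f=(f_1,f_2,\dots)$, coordinatewise operations), a Hilbert module over itself with $\langle\vec f,\vec g\rangle=\vec f^*\vec g$; $B:=A\oplus T$, $Y:=X\oplus T$ with $(\xi,\vec f)(a,\vec g)=(\xi a,\vec f\vec g)$, $\langle(\xi,\vec f),(\nu,\vec g)\rangle_B=(\langle\xi,\nu\rangle_A,\vec f^*\vec g)$, $\phi_B(a,\vec f)(\xi,\vec g)=(\phi(a)\xi,(ag_1,f_1g_2,f_2g_3,\dots))$. *)

theory Defs
  imports Complex_Main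
begin

class scaleC = fixes scaleC :: "complex \<Rightarrow> 'a \<Rightarrow> 'a" (infixr "*\<^sub>C" 75)

class complex_vector = ab_group_add + scaleC +
  assumes scaleC_add_right: "c *\<^sub>C (x + y) = c *\<^sub>C x + c *\<^sub>C y"
    and scaleC_add_left: "(c + d) *\<^sub>C x = c *\<^sub>C x + d *\<^sub>C x"
    and scaleC_scaleC: "c *\<^sub>C d *\<^sub>C x = (c * d) *\<^sub>C x"
    and scaleC_one: "1 *\<^sub>C x = x"

class star_op = fixes star :: "'a \<Rightarrow> 'a"

class cstar_algebra = real_normed_algebra + banach + complex_vector + star_op +
  assumes scaleR_scaleC: "scaleR r x = complex_of_real r *\<^sub>C x"
    and norm_scaleC: "norm (c *\<^sub>C x) = cmod c * norm x"
    and mult_scaleC_left: "(c *\<^sub>C x) * y = c *\<^sub>C (x * y)"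
    and mult_scaleC_right: "x * (c *\<^sub>C y) = c *\<^sub>C (x * y)"
    and star_star: "star (star x) = x"
    and star_add: "star (x + y) = star x + star y"
    and star_scaleC: "star (c *\<^sub>C x) = cnj c *\<^sub>C star x"
    and star_mult: "star (x * y) = star y * star x"
    and cstar_identity: "norm (star x * x) = norm x * norm x"

definition positive :: "'a::cstar_algebra \<Rightarrow> bool" where
  "positive a \<longleftrightarrow> (\<exists>b. a = star b * b)"

definition hm_norm :: "('x \<Rightarrow> 'x \<Rightarrow> 'a::cstar_algebra) \<Rightarrow> 'x \<Rightarrow> real" where
  "hm_norm ip x = sqrt (norm (ip x x))"

definition hilbert_module ::
  "('x::complex_vector \<Rightarrow> 'a::cstar_algebra \<Rightarrow> 'x) \<Rightarrow> ('x \<Rightarrow> 'x \<Rightarrow> 'a) \<Rightarrow> bool" where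
  "hilbert_module rm ip \<longleftrightarrow>
     (\<forall>x y a. rm (x + y) a = rm x a + rm y a) \<and>
     (\<forall>x a b. rm x (a + b) = rm x a + rm x b) \<and>
     (\<forall>x a b. rm x (a * b) = rm (rm x a) b) \<and>
     (\<forall>c x a. rm (c *\<^sub>C x) a = c *\<^sub>C rm x a) \<and>
     (\<forall>c x a. rm x (c *\<^sub>C a) = c *\<^sub>C rm x a) \<and>
     (\<forall>x y z. ip x (y + z) = ip x y + ip x z) \<and>
     (\<forall>c x y. ip x (c *\<^sub>C y) = c *\<^sub>C ip x y) \<and>
     (\<forall>x y a. ip x (rm y a) = ip x y * a) \<and>
     (\<forall>x y. ip y x = star (ip x y)) \<and>
     (\<forall>x. positive (ip x x)) \<and>
     (\<forall>x. ip x x = 0 \<longrightarrow> x = 0) \<and>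
     (\<forall>s. (\<forall>e>0. \<exists>N. \<forall>m\<ge>N. \<forall>n\<ge>N. hm_norm ip (s m - s n) < e)
          \<longrightarrow> (\<exists>l. (\<lambda>n. hm_norm ip (s n - l)) \<longlonglongrightarrow> 0))"

text \<open>C*-correspondence: phi is a *-homomorphism A -> L(X) (phi a adjointable with adjoint phi (a*)).\<close>

definition correspondence ::
  "('x::complex_vector \<Rightarrow> 'a::cstar_algebra \<Rightarrow> 'x) \<Rightarrow> ('x \<Rightarrow> 'x \<Rightarrow> 'a) \<Rightarrow> ('a \<Rightarrow> 'x \<Rightarrow> 'x) \<Rightarrow> bool" where
  "correspondence rm ip phi \<longleftrightarrow> hilbert_module rm ip \<and>
     (\<forall>a x y. ip (phi a x) y = ip x (phi (star a) y)) \<and>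
     (\<forall>a b x. phi (a + b) x = phi a x + phi b x) \<and>
     (\<forall>c a x. phi (c *\<^sub>C a) x = c *\<^sub>C phi a x) \<and>
     (\<forall>a b x. phi (a * b) x = phi a (phi b x))"

definition kerphi :: "('a::cstar_algebra \<Rightarrow> 'x::complex_vector \<Rightarrow> 'x) \<Rightarrow> 'a set" where
  "kerphi phi = {a. \<forall>x. phi a x = 0}"

text \<open>T = c_0-direct sum of copies of ker phi; coordinates indexed by nat (0,1,2,...).\<close>

definition tailT :: "('a::cstar_algebra \<Rightarrow> 'x::complex_vector \<Rightarrow> 'x) \<Rightarrow> (nat \<Rightarrow> 'a) set" where
  "tailT phi = {f. (\<forall>n. f n \<in> kerphi phi) \<and> f \<longlonglongrightarrow> 0}"

definition carrierB :: "('a::cstar_algebra \<Rightarrow> 'x::complex_vector \<Rightarrow> 'x) \<Rightarrow> ('a \<times> (nat \<Rightarrow> 'a)) set" where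
  "carrierB phi = UNIV \<times> tailT phi"

definition carrierY :: "('a::cstar_algebra \<Rightarrow> 'x::complex_vector \<Rightarrow> 'x) \<Rightarrow> ('x \<times> (nat \<Rightarrow> 'a)) set" where
  "carrierY phi = UNIV \<times> tailT phi"

definition eps :: "nat \<Rightarrow> 'a::zero \<Rightarrow> nat \<Rightarrow> 'a" where
  "eps i f = (\<lambda>n. if n = i then f else 0)"

fun addB :: "'a::cstar_algebra \<times> (nat \<Rightarrow> 'a) \<Rightarrow> 'a \<times> (nat \<Rightarrow> 'a) \<Rightarrow> 'a \<times> (nat \<Rightarrow> 'a)" where
  "addB (a, f) (b, g) = (a + b, \<lambda>n. f n + g n)"
fun scalB :: "complex \<Rightarrow> 'a::cstar_algebra \<times> (nat \<Rightarrow> 'a) \<Rightarrow> 'a \<times> (nat \<Rightarrow> 'a)" where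
  "scalB c (a, f) = (c *\<^sub>C a, \<lambda>n. c *\<^sub>C f n)"
fun multB :: "'a::cstar_algebra \<times> (nat \<Rightarrow> 'a) \<Rightarrow> 'a \<times> (nat \<Rightarrow> 'a) \<Rightarrow> 'a \<times> (nat \<Rightarrow> 'a)" where
  "multB (a, f) (b, g) = (a * b, \<lambda>n. f n * g n)"
fun starB :: "'a::cstar_algebra \<times> (nat \<Rightarrow> 'a) \<Rightarrow> 'a \<times> (nat \<Rightarrow> 'a)" where
  "starB (a, f) = (star a, \<lambda>n. star (f n))"
fun normB :: "'a::cstar_algebra \<times> (nat \<Rightarrow> 'a) \<Rightarrow> real" where
  "normB (a, f) = max (norm a) (SUP n. norm (f n))"

fun addY :: "'x::complex_vector \<times> (nat \<Rightarrow> 'a::cstar_algebra) \<Rightarrow> 'x \<times> (nat \<Rightarrow> 'a) \<Rightarrow> 'x \<times> (nat \<Rightarrow> 'a)" where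
  "addY (x, f) (y, g) = (x + y, \<lambda>n. f n + g n)"
fun scalY :: "complex \<Rightarrow> 'x::complex_vector \<times> (nat \<Rightarrow> 'a::cstar_algebra) \<Rightarrow> 'x \<times> (nat \<Rightarrow> 'a)" where
  "scalY c (x, f) = (c *\<^sub>C x, \<lambda>n. c *\<^sub>C f n)"
definition zeroY :: "'x::complex_vector \<times> (nat \<Rightarrow> 'a::cstar_algebra)" where
  "zeroY = (0, \<lambda>n. 0)"

fun rmulY :: "('x::complex_vector \<Rightarrow> 'a::cstar_algebra \<Rightarrow> 'x) \<Rightarrow>
    'x \<times> (nat \<Rightarrow> 'a) \<Rightarrow> 'a \<times> (nat \<Rightarrow> 'a) \<Rightarrow> 'x \<times> (nat \<Rightarrow> 'a)" where
  "rmulY rm (x, f) (a, g) = (rm x a, \<lambda>n. f n * g n)"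

fun ipY :: "('x::complex_vector \<Rightarrow> 'x \<Rightarrow> 'a::cstar_algebra) \<Rightarrow>
    'x \<times> (nat \<Rightarrow> 'a) \<Rightarrow> 'x \<times> (nat \<Rightarrow> 'a) \<Rightarrow> 'a \<times> (nat \<Rightarrow> 'a)" where
  "ipY ip (x, f) (y, g) = (ip x y, \<lambda>n. star (f n) * g n)"

fun phiB :: "('a::cstar_algebra \<Rightarrow> 'x::complex_vector \<Rightarrow> 'x) \<Rightarrow>
    'a \<times> (nat \<Rightarrow> 'a) \<Rightarrow> 'x \<times> (nat \<Rightarrow> 'a) \<Rightarrow> 'x \<times> (nat \<Rightarrow> 'a)" where
  "phiB phi (a, f) (x, g) =
     (phi a x, \<lambda>n. case n of 0 \<Rightarrow> a * g 0 | Suc m \<Rightarrow> f m * g (Suc m))"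

definition normY :: "('x::complex_vector \<Rightarrow> 'x \<Rightarrow> 'a::cstar_algebra) \<Rightarrow> 'x \<times> (nat \<Rightarrow> 'a) \<Rightarrow> real" where
  "normY ip y = sqrt (normB (ipY ip y y))"

definition theta :: "('x::complex_vector \<Rightarrow> 'a::cstar_algebra \<Rightarrow> 'x) \<Rightarrow> ('x \<Rightarrow> 'x \<Rightarrow> 'a) \<Rightarrow>
    'x \<times> (nat \<Rightarrow> 'a) \<Rightarrow> 'x \<times> (nat \<Rightarrow> 'a) \<Rightarrow> 'x \<times> (nat \<Rightarrow> 'a) \<Rightarrow> 'x \<times> (nat \<Rightarrow> 'a)" where
  "theta rm ip u v z = rmulY rm u (ipY ip v z)"

text \<open>Finite-rank operators span{Theta_{u,v} : u, v in Y} (scalars absorbed into u).\<close>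

definition finite_rankY where
  "finite_rankY rm ip phi =
     {S. \<exists>ps. set ps \<subseteq> carrierY phi \<times> carrierY phi \<and>
          (\<forall>z. S z = foldr (\<lambda>(u, v) acc. addY (theta rm ip u v z) acc) ps zeroY)}"

definition compactY where
  "compactY rm ip phi =
     {S. (\<forall>y\<in>carrierY phi. S y \<in> carrierY phi) \<and>
         (\<forall>e>0. \<exists>S'\<in>finite_rankY rm ip phi. \<forall>y\<in>carrierY phi.
             normY ip (addY (S y) (scalY (-1) (S' y))) \<le> e * normY ip y)}"

definition adjointY where
  "adjointY ip phi S S' \<longleftrightarrow>
     (\<forall>y\<in>carrierY phi. \<forall>y'\<in>carrierY phi. ipY ip (S y) y' = ipY ip y (S' y'))"

definition tail_representation ::
  "('x::complex_vector \<Rightarrow> 'a::cstar_algebra \<Rightarrow> 'x) \<Rightarrow> ('x \<Rightarrow> 'x \<Rightarrow> 'a) \<Rightarrow> ('a \<Rightarrow> 'x \<Rightarrow> 'x) \<Rightarrow>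
   ('a \<times> (nat \<Rightarrow> 'a) \<Rightarrow> 'c::cstar_algebra) \<Rightarrow> ('x \<times> (nat \<Rightarrow> 'a) \<Rightarrow> 'c) \<Rightarrow> bool" where
  "tail_representation rm ip phi rho t \<longleftrightarrow>
     (\<forall>b\<in>carrierB phi. \<forall>b'\<in>carrierB phi.
        rho (addB b b') = rho b + rho b' \<and> rho (multB b b') = rho b * rho b') \<and>
     (\<forall>c. \<forall>b\<in>carrierB phi. rho (scalB c b) = c *\<^sub>C rho b) \<and>
     (\<forall>b\<in>carrierB phi. rho (starB b) = star (rho b)) \<and>
     (\<forall>y\<in>carrierY phi. \<forall>y'\<in>carrierY phi. t (addY y y') = t y + t y') \<and>
     (\<forall>c. \<forall>y\<in>carrierY phi. t (scalY c y) = c *\<^sub>C t y) \<and>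
     (\<forall>y\<in>carrierY phi. \<forall>y'\<in>carrierY phi. star (t y) * t y' = rho (ipY ip y y')) \<and>
     (\<forall>b\<in>carrierB phi. \<forall>y\<in>carrierY phi. t (phiB phi b y) = rho b * t y) \<and>
     (\<forall>b\<in>carrierB phi. \<forall>y\<in>carrierY phi. t (rmulY rm y b) = t y * rho b)"

text \<open>rho1 is the *-homomorphism K(Y) -> C with rho1(Theta_{y,y'}) = t(y) t(y')^*
  (uniquely determined; it is contractive for the operator norm on Y).\<close>

definition is_pi1 ::
  "('x::complex_vector \<Rightarrow> 'a::cstar_algebra \<Rightarrow> 'x) \<Rightarrow> ('x \<Rightarrow> 'x \<Rightarrow> 'a) \<Rightarrow> ('a \<Rightarrow> 'x \<Rightarrow> 'x) \<Rightarrow>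
   ('x \<times> (nat \<Rightarrow> 'a) \<Rightarrow> 'c::cstar_algebra) \<Rightarrow>
   (('x \<times> (nat \<Rightarrow> 'a) \<Rightarrow> 'x \<times> (nat \<Rightarrow> 'a)) \<Rightarrow> 'c) \<Rightarrow> bool" where
  "is_pi1 rm ip phi t rho1 \<longleftrightarrow>
     (\<forall>u\<in>carrierY phi. \<forall>v\<in>carrierY phi. rho1 (theta rm ip u v) = t u * star (t v)) \<and>
     (\<forall>S\<in>compactY rm ip phi. \<forall>S'\<in>compactY rm ip phi.
        rho1 (\<lambda>z. addY (S z) (S' z)) = rho1 S + rho1 S' \<and> rho1 (S \<circ> S') = rho1 S * rho1 S') \<and>
     (\<forall>c. \<forall>S\<in>compactY rm ip phi. rho1 (\<lambda>z. scalY c (S z)) = c *\<^sub>C rho1 S) \<and>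
     (\<forall>S\<in>compactY rm ip phi. \<forall>S'. (\<forall>y\<in>carrierY phi. S' y \<in> carrierY phi) \<and>
        adjointY ip phi S S' \<longrightarrow> rho1 S' = star (rho1 S)) \<and>
     (\<forall>S\<in>compactY rm ip phi. \<forall>M\<ge>0. (\<forall>y\<in>carrierY phi. normY ip (S y) \<le> M * normY ip y)
        \<longrightarrow> norm (rho1 S) \<le> M)"

end

theory Submission
  imports Defs
begin

text \<open>If \<open>\<rho>(0, \<epsilon>\<^sub>i f) = 0\<close> then \<open>u = (0, \<epsilon>\<^sub>i f)\<close> satisfies \<open>t(u)\<^sup>* t(u) = \<rho>\<langle>u, u\<rangle> = 0\<close>, so \<open>t(u) = 0\<close>
  and \<open>\<rho>\<^sup>(\<^sup>1\<^sup>)(\<Theta>\<^sub>u\<^sub>,\<^sub>u) = 0\<close>. For \<open>f \<in> ker \<phi>\<close> the operator \<open>\<Theta>\<^sub>u\<^sub>,\<^sub>u\<close> is left multiplication by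
  \<open>\<phi>\<^sub>B(0, \<epsilon>\<^sub>i\<^sub>-\<^sub>1(f f\<^sup>*))\<close> (or by \<open>\<phi>\<^sub>B(f f\<^sup>*, 0)\<close> if \<open>i = 0\<close>), so coisometry moves the hypothesis one
  coordinate down, with \<open>f f\<^sup>*\<close> in place of \<open>f\<close>. After \<open>i\<close> steps injectivity of \<open>\<rho>\<close> on \<open>A\<close> gives
  \<open>f f\<^sup>* = 0\<close>, and the C*-identity gives \<open>f = 0\<close>.\<close>

lemma star_zero [simp]: "star (0::'a::cstar_algebra) = 0"
  using star_add[of "0::'a" 0] by simp

lemma star_mult_self_eq_zero_iff [simp]: "star x * x = 0 \<longleftrightarrow> (x::'a::cstar_algebra) = 0"
  using cstar_identity[of x] by auto

lemma star_eq_zero_iff [simp]: "star x = 0 \<longleftrightarrow> (x::'a::cstar_algebra) = 0"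
  by (metis star_star star_zero)

lemma mult_star_self_eq_zero_iff [simp]: "x * star x = 0 \<longleftrightarrow> (x::'a::cstar_algebra) = 0"
  using star_mult_self_eq_zero_iff[of "star x"] by (simp add: star_star)

lemma hilbert_module_rm_add_left:
  assumes "hilbert_module rm ip"
  shows "rm (x + y) a = rm x a + rm y a"
  using assms unfolding hilbert_module_def by (elim conjE) (erule allE)+

lemma hilbert_module_ip_add_right:
  assumes "hilbert_module rm ip"
  shows "ip x (y + z) = ip x y + ip x z"
  using assms unfolding hilbert_module_def by (elim conjE) (erule allE)+

lemma hilbert_module_ip_self_eq_zero:
  assumes "hilbert_module rm ip" and "ip x x = 0"
  shows "x = 0"
  using assms unfolding hilbert_module_def by (elim conjE) (erule allE, erule mp)

lemma hilbert_module_rm_zero_left: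
  assumes "hilbert_module rm ip"
  shows "rm 0 a = 0"
  using hilbert_module_rm_add_left[OF assms, of 0 0 a] by simp

lemma hilbert_module_ip_zero_right:
  assumes "hilbert_module rm ip"
  shows "ip x 0 = 0"
  using hilbert_module_ip_add_right[OF assms, of x 0 0] by simp

lemma correspondence_phi_zero:
  assumes "correspondence rm ip phi"
  shows "phi 0 x = 0"
proof -
  have "phi (0 + 0) x = phi 0 x + phi 0 x"
    using assms by (simp only: correspondence_def)
  then show ?thesis by simp
qed

lemma correspondence_zero_in_kerphi:
  assumes "correspondence rm ip phi"
  shows "0 \<in> kerphi phi"
  using correspondence_phi_zero[OF assms] by (simp add: kerphi_def)

lemma correspondence_kerphi_mult_right:
  assumes "correspondence rm ip phi" and "f \<in> kerphi phi"
  shows "f * g \<in> kerphi phi"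
  using assms by (simp add: correspondence_def kerphi_def)

lemma correspondence_kerphi_star:
  assumes corr: "correspondence rm ip phi" and f: "f \<in> kerphi phi"
  shows "star f \<in> kerphi phi"
proof -
  have hm: "hilbert_module rm ip" using corr by (simp add: correspondence_def)
  have "phi (star f) x = 0" for x
  proof -
    have "ip (phi (star f) x) (phi (star f) x) = ip x (phi f (phi (star f) x))"
      using corr by (simp add: correspondence_def star_star)
    also have "\<dots> = 0"
      using f hilbert_module_ip_zero_right[OF hm] by (simp add: kerphi_def)
    finally show ?thesis by (rule hilbert_module_ip_self_eq_zero[OF hm])
  qed
  then show ?thesis by (simp add: kerphi_def)
qed

lemma zero_in_tailT:
  assumes "0 \<in> kerphi phi"
  shows "(\<lambda>n. 0) \<in> tailT phi"
  using assms by (simp add: tailT_def)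

lemma eps_in_tailT:
  assumes "0 \<in> kerphi phi" and "f \<in> kerphi phi"
  shows "eps i f \<in> tailT phi"
proof -
  have "\<forall>\<^sub>F n in sequentially. eps i f n = 0"
    by (rule eventually_sequentiallyI[of "Suc i"]) (simp add: eps_def)
  then have "eps i f \<longlonglongrightarrow> 0" by (rule tendsto_eventually)
  then show ?thesis using assms by (simp add: tailT_def eps_def)
qed

lemma theta_eps_eps:
  assumes "hilbert_module rm ip"
  shows "theta rm ip (0, eps i f) (0, eps i g) = (\<lambda>z. (0, eps i (f * star g * snd z i)))"
  using hilbert_module_rm_zero_left[OF assms]
  by (auto simp: fun_eq_iff theta_def eps_def mult.assoc split: prod.split)

lemma phiB_kerphi_zero:
  assumes "g \<in> kerphi phi"
  shows "phiB phi (g, \<lambda>n. 0) = (\<lambda>z. (0, eps 0 (g * snd z 0)))"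
  using assms by (auto simp: fun_eq_iff kerphi_def eps_def split: prod.split nat.split)

lemma phiB_zero_eps:
  assumes "correspondence rm ip phi"
  shows "phiB phi (0, eps m g) = (\<lambda>z. (0, eps (Suc m) (g * snd z (Suc m))))"
  using correspondence_phi_zero[OF assms]
  by (auto simp: fun_eq_iff eps_def split: prod.split nat.split)

locale coisometric_tail_representation =
  fixes rm :: "'x::complex_vector \<Rightarrow> 'a::cstar_algebra \<Rightarrow> 'x"
    and ip :: "'x \<Rightarrow> 'x \<Rightarrow> 'a"
    and phi :: "'a \<Rightarrow> 'x \<Rightarrow> 'x"
    and rho :: "'a \<times> (nat \<Rightarrow> 'a) \<Rightarrow> 'c::cstar_algebra"
    and t :: "'x \<times> (nat \<Rightarrow> 'a) \<Rightarrow> 'c"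
    and rho1 :: "('x \<times> (nat \<Rightarrow> 'a) \<Rightarrow> 'x \<times> (nat \<Rightarrow> 'a)) \<Rightarrow> 'c"
  assumes corr: "correspondence rm ip phi"
    and rep: "tail_representation rm ip phi rho t"
    and pi1: "is_pi1 rm ip phi t rho1"
    and coisometric: "\<forall>b \<in> kerphi phi \<times> tailT phi. rho1 (phiB phi b) = rho b"
begin

lemma hilbert_module: "hilbert_module rm ip"
  using corr by (simp add: correspondence_def)

lemma zero_in_kerphi: "0 \<in> kerphi phi"
  by (rule correspondence_zero_in_kerphi[OF corr])

lemma rho_zero: "rho (0, \<lambda>n. 0) = 0"
proof -
  have "(0, \<lambda>n. 0) \<in> carrierB phi"
    using zero_in_tailT[OF zero_in_kerphi] by (simp add: carrierB_def)
  then have "rho (addB (0, \<lambda>n. 0) (0, \<lambda>n. 0)) = rho (0, \<lambda>n. 0) + rho (0, \<lambda>n. 0)"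
    using rep unfolding tail_representation_def by blast
  then show ?thesis by simp
qed

lemma t_zero_eps_eq_zero:
  assumes f: "f \<in> kerphi phi" and rho_f: "rho (0, eps i f) = 0"
  shows "t (0, eps i f) = 0"
proof -
  let ?u = "(0::'x, eps i f)"
  have f_B: "(0, eps i f) \<in> carrierB phi" and star_f_B: "(0, eps i (star f)) \<in> carrierB phi"
    using eps_in_tailT[OF zero_in_kerphi] f correspondence_kerphi_star[OF corr f]
    by (simp_all add: carrierB_def)
  then have u_Y: "?u \<in> carrierY phi" by (simp add: carrierB_def carrierY_def)
  have "ipY ip ?u ?u = multB (0, eps i (star f)) (0, eps i f)"
    using hilbert_module_ip_zero_right[OF hilbert_module] by (auto simp: eps_def)
  moreover have "star (t ?u) * t ?u = rho (ipY ip ?u ?u)"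
    using rep u_Y unfolding tail_representation_def by blast
  moreover have "rho (multB (0, eps i (star f)) (0, eps i f)) = rho (0, eps i (star f)) * rho (0, eps i f)"
    using rep f_B star_f_B unfolding tail_representation_def by blast
  ultimately show ?thesis using rho_f by simp
qed

lemma rho1_shift_eq_zero:
  assumes f: "f \<in> kerphi phi" and rho_f: "rho (0, eps i f) = 0"
  shows "rho1 (\<lambda>z. (0, eps i (f * star f * snd z i))) = 0"
proof -
  let ?u = "(0::'x, eps i f)"
  have u_Y: "?u \<in> carrierY phi"
    using eps_in_tailT[OF zero_in_kerphi f] by (simp add: carrierY_def)
  have "rho1 (theta rm ip ?u ?u) = t ?u * star (t ?u)"
    using pi1 u_Y by (simp add: is_pi1_def)
  then show ?thesis
    using t_zero_eps_eq_zero[OF assms] theta_eps_eps[OF hilbert_module] by simp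
qed

lemma rho_eps_0_eq_zero_imp:
  assumes f: "f \<in> kerphi phi" and rho_f: "rho (0, eps 0 f) = 0"
  shows "rho (f * star f, \<lambda>n. 0) = 0"
proof -
  have ff: "f * star f \<in> kerphi phi"
    by (rule correspondence_kerphi_mult_right[OF corr f])
  then have "rho (f * star f, \<lambda>n. 0) = rho1 (phiB phi (f * star f, \<lambda>n. 0))"
    using coisometric zero_in_tailT[OF zero_in_kerphi] by simp
  also have "\<dots> = 0"
    using rho1_shift_eq_zero[OF assms] phiB_kerphi_zero[OF ff] by simp
  finally show ?thesis .
qed

lemma rho_eps_Suc_eq_zero_imp:
  assumes f: "f \<in> kerphi phi" and rho_f: "rho (0, eps (Suc m) f) = 0"
  shows "rho (0, eps m (f * star f)) = 0"
proof -
  have "f * star f \<in> kerphi phi"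
    by (rule correspondence_kerphi_mult_right[OF corr f])
  then have "rho (0, eps m (f * star f)) = rho1 (phiB phi (0, eps m (f * star f)))"
    using coisometric zero_in_kerphi eps_in_tailT[OF zero_in_kerphi] by simp
  also have "\<dots> = 0"
    using rho1_shift_eq_zero[OF assms] phiB_zero_eps[OF corr] by simp
  finally show ?thesis .
qed

end

theorem mainTheorem5:
  fixes rm :: "'x::complex_vector \<Rightarrow> 'a::cstar_algebra \<Rightarrow> 'x"
    and ip :: "'x \<Rightarrow> 'x \<Rightarrow> 'a"
    and phi :: "'a \<Rightarrow> 'x \<Rightarrow> 'x"
    and rho :: "'a \<times> (nat \<Rightarrow> 'a) \<Rightarrow> 'c::cstar_algebra"
    and t :: "'x \<times> (nat \<Rightarrow> 'a) \<Rightarrow> 'c"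
    and rho1 :: "('x \<times> (nat \<Rightarrow> 'a) \<Rightarrow> 'x \<times> (nat \<Rightarrow> 'a)) \<Rightarrow> 'c"
  assumes corr: "correspondence rm ip phi"
    and rep: "tail_representation rm ip phi rho t"
    and rho1: "is_pi1 rm ip phi t rho1"
    and coisometric: "\<forall>b \<in> kerphi phi \<times> tailT phi. rho1 (phiB phi b) = rho b"
    and inj: "inj (\<lambda>a. rho (a, (\<lambda>n. 0)))"
  shows "\<forall>i. \<forall>f \<in> kerphi phi. rho (0, eps i f) = 0 \<longrightarrow> f = 0"
proof (intro allI)
  fix i
  interpret coisometric_tail_representation rm ip phi rho t rho1
    using assms by unfold_locales
  show "\<forall>f \<in> kerphi phi. rho (0, eps i f) = 0 \<longrightarrow> f = 0"
  proof (induction i)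
    case 0
    show ?case
    proof (intro ballI impI)
      fix f assume "f \<in> kerphi phi" and "rho (0, eps 0 f) = 0"
      then have "rho (f * star f, \<lambda>n. 0) = rho (0, \<lambda>n. 0)"
        using rho_eps_0_eq_zero_imp rho_zero by simp
      then have "f * star f = 0" by (rule injD[OF inj])
      then show "f = 0" by simp
    qed
  next
    case (Suc m)
    show ?case
    proof (intro ballI impI)
      fix f assume "f \<in> kerphi phi" and "rho (0, eps (Suc m) f) = 0"
      then have "rho (0, eps m (f * star f)) = 0" by (rule rho_eps_Suc_eq_zero_imp)
      then have "f * star f = 0"
        using Suc.IH correspondence_kerphi_mult_right[OF corr \<open>f \<in> kerphi phi\<close>] by blast
      then show "f = 0" by simp
    qed
  qed
qed

end
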